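(* Let $\epsilon > 0$, and fix integers $k \ge 2$ and $n > k$. Consider the randomized algorithm $\mathcal{A}$ which, on input a database $D$ of $n$ rows, does the following. It draws independent $Z_1 \sim \mathrm{Lap}\!\left(\frac{9 + 5/n}{\epsilon/2}\right)$ and $Z_2 \sim \mathrm{Lap}\!\left(\frac{7}{\epsilon/2}\right)$. It sets $\widehat{\mathrm{SSA}} = \mathrm{SSA}(D) + Z_1$, $\widehat{\mathrm{SSE}} = \mathrm{SSE}(D) + Z_2$, and $\widehat F = \frac{\widehat{\mathrm{SSA}}/(k-1)}{\widehat{\mathrm{SSE}}/(n-k)}$. It outputs the triple $(\widehat F, \widehat{\mathrm{SSA}}, \widehat{\mathrm{SSE}})$. Then $\mathcal{A}$ is $\epsilon$-differentially private.
   Context: A database $D$ consists of $n$ rows. Each row is a pair $(g, y)$ with group label $g \in \{1,\dots,k\}$ and response $y \in [0,1]$. Let $n_i$ be the number of rows in group $i$, with responses $y_{i1},\dots,y_{in_i}$ and group mean $\overline{y}_i$. Let $\overline{y}$ be the mean of all responses; empty groups contribute nothing. Define $\mathrm{SSA}(D) = \sum_{i=1}^k n_i(\overline{y}_i - \overline{y})^2$ and $\mathrm{SSE}(D) = \sum_{i=1}^k\sum_{j=1}^{n_i}(y_{ij}-\overline{y}_i)^2$. $\mathrm{Lap}(b)$ denotes the Laplace distribution with density $e^{-|x|/b}/(2b)$ on $\mathbb{R}$. The output $\widehat F$ is well defined almost surely, since $\widehat{\mathrm{SSE}} \neq 0$ with probability $1$. Two databases with $n$ rows each are neighboring if they differ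 in exactly one row; both the label and the response of that row may change. A randomized algorithm $f$ with range $R$ is $\epsilon$-differentially private if $\Pr[f(D)\in S] \le e^{\epsilon}\Pr[f(D')\in S]$ for all neighboring $D, D'$ and all measurable $S \subseteq R$. *)

theory Defs
  imports "HOL-Probability.Probability"
begin

text \<open>A database is a list of rows (g, y): group label g and response y.\<close>
type_synonym database = "(nat \<times> real) list"

definition valid_db :: "nat \<Rightarrow> nat \<Rightarrow> database \<Rightarrow> bool" where
  "valid_db k n D \<longleftrightarrow> length D = n \<and>
     (\<forall>r \<in> set D. fst r \<in> {1..k} \<and> snd r \<in> {0..1})"

definition neighboring :: "database \<Rightarrow> database \<Rightarrow> bool" where
  "neighboring D D' \<longleftrightarrow> length D = length D' \<and>
     card {j. j < length D \<and> D ! j \<noteq> D' ! j} = 1"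

definition group_count :: "database \<Rightarrow> nat \<Rightarrow> nat" where
  "group_count D i = length (filter (\<lambda>r. fst r = i) D)"

definition group_mean :: "database \<Rightarrow> nat \<Rightarrow> real" where
  "group_mean D i = sum_list (map snd (filter (\<lambda>r. fst r = i) D)) / real (group_count D i)"

definition grand_mean :: "database \<Rightarrow> real" where
  "grand_mean D = sum_list (map snd D) / real (length D)"

definition SSA :: "nat \<Rightarrow> database \<Rightarrow> real" where
  "SSA k D = (\<Sum>i=1..k. real (group_count D i) * (group_mean D i - grand_mean D)^2)"

definition SSE :: "nat \<Rightarrow> database \<Rightarrow> real" where
  "SSE k D = (\<Sum>i=1..k. sum_list (map (\<lambda>r. (snd r - group_mean D i)^2)
                                         (filter (\<lambda>r. fst r = i) D)))"

definition laplace_density :: "real \<Rightarrow> real \<Rightarrow> real" where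
  "laplace_density b x = exp (- \<bar>x\<bar> / b) / (2 * b)"

definition Lap :: "real \<Rightarrow> real measure" where
  "Lap b = density lborel (\<lambda>x. ennreal (laplace_density b x))"

definition anova_mech :: "real \<Rightarrow> nat \<Rightarrow> nat \<Rightarrow> database \<Rightarrow> (real \<times> real \<times> real) measure" where
  "anova_mech \<epsilon> k n D =
     distr (Lap ((9 + 5 / real n) / (\<epsilon> / 2)) \<Otimes>\<^sub>M Lap (7 / (\<epsilon> / 2)))
           (borel \<Otimes>\<^sub>M borel \<Otimes>\<^sub>M borel)
           (\<lambda>(z1, z2). let a = SSA k D + z1; e = SSE k D + z2
                       in ((a / (real k - 1)) / (e / (real n - real k)), a, e))"

definition differentially_private ::
  "real \<Rightarrow> (database \<Rightarrow> bool) \<Rightarrow> (database \<Rightarrow> 'b measure) \<Rightarrow> 'b measure \<Rightarrow> bool" where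
  "differentially_private \<epsilon> valid f R \<longleftrightarrow>
     (\<forall>D D'. valid D \<longrightarrow> valid D' \<longrightarrow> neighboring D D' \<longrightarrow>
        (\<forall>S \<in> sets R. measure (f D) S \<le> exp \<epsilon> * measure (f D') S))"

end

theory Submission
  imports Defs
begin

text \<open>
  The mechanism is a two-dimensional Laplace mechanism: moving the centre of \<open>Lap b\<close> by \<open>\<Delta>\<close>
  changes its density pointwise by at most a factor \<open>exp (\<bar>\<Delta>\<bar> / b)\<close>, so releasing
  \<open>(SSA + Z\<^sub>1, SSE + Z\<^sub>2)\<close>, and hence any measurable function of it, is \<open>\<epsilon>\<close>-private as soon as
  \<open>\<bar>\<Delta>SSA\<bar> / b\<^sub>1 + \<bar>\<Delta>SSE\<bar> / b\<^sub>2 \<le> \<epsilon>\<close>.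
  For the sensitivities: adding a response \<open>y \<in> [0,1]\<close> to a sample of \<open>c\<close> responses with sum
  \<open>u\<close> raises its sum of squared deviations by \<open>(c y - u)\<^sup>2 / (c (c + 1)) \<in> [0,1]\<close>. Changing one row
  therefore moves the within-group sum of squares of at most two groups, each by at most 1, so
  \<open>\<bar>\<Delta>SSE\<bar> \<le> 2\<close>; the total sum of squares moves by at most 1, and \<open>SSA = SST - SSE\<close> gives
  \<open>\<bar>\<Delta>SSA\<bar> \<le> 3\<close>.
\<close>

lemma sets_Lap [measurable_cong, simp]: "sets (Lap b) = sets borel"
  by (simp add: Lap_def)

lemma space_Lap [simp]: "space (Lap b) = UNIV"
  by (simp add: Lap_def)

lemma finite_measure_Lap:
  assumes b: "b > 0"
  shows "finite_measure (Lap b)"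
proof
  have exp1: "(\<integral>\<^sup>+x. ennreal (exponential_density (1/b) x) \<partial>lborel) = 1"
    using prob_space.emeasure_space_1[OF prob_space_exponential_density[of "1/b"]] b
    by (simp add: emeasure_density)
  have exp2: "(\<integral>\<^sup>+x. ennreal (exponential_density (1/b) (-x)) \<partial>lborel) = 1"
    using nn_integral_real_affine[of "\<lambda>x. ennreal (exponential_density (1/b) x)" "-1" 0] exp1
    by simp
  have "emeasure (Lap b) (space (Lap b)) = (\<integral>\<^sup>+x. ennreal (laplace_density b x) \<partial>lborel)"
    by (simp add: Lap_def emeasure_density laplace_density_def)
  also have "\<dots> \<le> (\<integral>\<^sup>+x. ennreal (exponential_density (1/b) x) + ennreal (exponential_density (1/b) (-x)) \<partial>lborel)"
  proof (rule nn_integral_mono)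
    fix x
    have "laplace_density b x \<le> exponential_density (1/b) x + exponential_density (1/b) (-x)"
      using b by (auto simp: laplace_density_def exponential_density_def field_simps)
    then show "ennreal (laplace_density b x)
        \<le> ennreal (exponential_density (1/b) x) + ennreal (exponential_density (1/b) (-x))"
      using b by (simp add: ennreal_plus[symmetric] exponential_density_def del: ennreal_plus)
  qed
  also have "\<dots> = 2"
    by (subst nn_integral_add) (auto simp: exp1 exp2)
  finally show "emeasure (Lap b) (space (Lap b)) \<noteq> \<infinity>"
    by (metis ennreal_numeral_less_top infinity_ennreal_def leD)
qed

lemma laplace_density_shift_le:
  assumes b: "b > 0"
  shows "laplace_density b (v - E) \<le> exp (\<bar>E - E'\<bar> / b) * laplace_density b (v - E')"
proof -
  have "- \<bar>v - E\<bar> / b \<le> \<bar>E - E'\<bar> / b + - \<bar>v - E'\<bar> / b"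
    using b by (simp add: field_simps)
  then have "exp (- \<bar>v - E\<bar> / b) \<le> exp (\<bar>E - E'\<bar> / b) * exp (- \<bar>v - E'\<bar> / b)"
    by (simp add: exp_add[symmetric])
  then show ?thesis
    using b unfolding laplace_density_def by (simp add: divide_right_mono)
qed

lemma nn_integral_Lap_shift:
  assumes "b > 0" and [measurable]: "h \<in> borel_measurable borel"
  shows "(\<integral>\<^sup>+y. h (E + y) \<partial>Lap b) = (\<integral>\<^sup>+v. ennreal (laplace_density b (v - E)) * h v \<partial>lborel)"
proof -
  have "(\<integral>\<^sup>+y. h (E + y) \<partial>Lap b) = (\<integral>\<^sup>+y. ennreal (laplace_density b y) * h (E + y) \<partial>lborel)"
    unfolding Lap_def by (subst nn_integral_density) (auto simp: laplace_density_def)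
  also have "\<dots> = (\<integral>\<^sup>+v. ennreal (laplace_density b (v - E)) * h v \<partial>lborel)"
    using nn_integral_real_affine[of "\<lambda>v. ennreal (laplace_density b (v - E)) * h v" 1 E]
    by (simp add: laplace_density_def)
  finally show ?thesis .
qed

lemma nn_integral_Lap_shift_le:
  assumes b: "b > 0" and [measurable]: "h \<in> borel_measurable borel"
  shows "(\<integral>\<^sup>+y. h (E + y) \<partial>Lap b) \<le> ennreal (exp (\<bar>E - E'\<bar> / b)) * (\<integral>\<^sup>+y. h (E' + y) \<partial>Lap b)"
proof -
  have "(\<integral>\<^sup>+v. ennreal (laplace_density b (v - E)) * h v \<partial>lborel)
      \<le> (\<integral>\<^sup>+v. ennreal (exp (\<bar>E - E'\<bar> / b)) * (ennreal (laplace_density b (v - E')) * h v) \<partial>lborel)"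
  proof (rule nn_integral_mono)
    fix v
    have "ennreal (laplace_density b (v - E))
        \<le> ennreal (exp (\<bar>E - E'\<bar> / b)) * ennreal (laplace_density b (v - E'))"
      using laplace_density_shift_le[OF b, of v E E'] b
      by (simp add: ennreal_mult[symmetric] laplace_density_def)
    then show "ennreal (laplace_density b (v - E)) * h v
        \<le> ennreal (exp (\<bar>E - E'\<bar> / b)) * (ennreal (laplace_density b (v - E')) * h v)"
      by (metis mult.assoc mult_right_mono zero_le)
  qed
  also have "\<dots> = ennreal (exp (\<bar>E - E'\<bar> / b)) * (\<integral>\<^sup>+v. ennreal (laplace_density b (v - E')) * h v \<partial>lborel)"
    by (rule nn_integral_cmult) (auto simp: laplace_density_def)
  finally show ?thesis
    by (simp add: nn_integral_Lap_shift[OF assms])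
qed

lemma emeasure_distr_Lap_pair_shift_le:
  assumes b1: "b1 > 0" and b2: "b2 > 0"
    and [measurable]: "g \<in> (borel \<Otimes>\<^sub>M borel) \<rightarrow>\<^sub>M R" "S \<in> sets R"
  shows "emeasure (distr (Lap b1 \<Otimes>\<^sub>M Lap b2) R (\<lambda>z. g (A + fst z, E + snd z))) S
     \<le> ennreal (exp (\<bar>A - A'\<bar> / b1 + \<bar>E - E'\<bar> / b2)) *
        emeasure (distr (Lap b1 \<Otimes>\<^sub>M Lap b2) R (\<lambda>z. g (A' + fst z, E' + snd z))) S"
proof -
  interpret L2: finite_measure "Lap b2" by (rule finite_measure_Lap[OF b2])
  define H where "H u v = (indicator S (g (u, v)) :: ennreal)" for u v
  have [measurable]: "(\<lambda>(u,v). H u v) \<in> borel_measurable (borel \<Otimes>\<^sub>M borel)"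
    "H u \<in> borel_measurable borel" for u
    unfolding H_def by measurable
  have iterated: "emeasure (distr (Lap b1 \<Otimes>\<^sub>M Lap b2) R (\<lambda>z. g (A0 + fst z, E0 + snd z))) S
     = (\<integral>\<^sup>+x. \<integral>\<^sup>+y. H (A0 + x) (E0 + y) \<partial>Lap b2 \<partial>Lap b1)" for A0 E0
  proof -
    have "emeasure (distr (Lap b1 \<Otimes>\<^sub>M Lap b2) R (\<lambda>z. g (A0 + fst z, E0 + snd z))) S
       = (\<integral>\<^sup>+z. H (A0 + fst z) (E0 + snd z) \<partial>(Lap b1 \<Otimes>\<^sub>M Lap b2))"
      by (subst nn_integral_indicator[symmetric], measurable)
         (subst nn_integral_distr, auto simp: H_def)
    also have "\<dots> = (\<integral>\<^sup>+x. \<integral>\<^sup>+y. H (A0 + x) (E0 + y) \<partial>Lap b2 \<partial>Lap b1)"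
      by (subst L2.nn_integral_fst[symmetric]) (auto simp: split_beta')
    finally show ?thesis .
  qed
  define K where "K u = (\<integral>\<^sup>+y. H u (E' + y) \<partial>Lap b2)" for u
  have [measurable]: "K \<in> borel_measurable borel"
    unfolding K_def by measurable
  have "(\<integral>\<^sup>+x. \<integral>\<^sup>+y. H (A + x) (E + y) \<partial>Lap b2 \<partial>Lap b1)
      \<le> (\<integral>\<^sup>+x. ennreal (exp (\<bar>E - E'\<bar> / b2)) * K (A + x) \<partial>Lap b1)"
    unfolding K_def by (rule nn_integral_mono) (rule nn_integral_Lap_shift_le[OF b2], measurable)
  also have "\<dots> = ennreal (exp (\<bar>E - E'\<bar> / b2)) * (\<integral>\<^sup>+x. K (A + x) \<partial>Lap b1)"
    by (rule nn_integral_cmult) measurable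
  also have "\<dots> \<le> ennreal (exp (\<bar>E - E'\<bar> / b2)) * (ennreal (exp (\<bar>A - A'\<bar> / b1)) * (\<integral>\<^sup>+x. K (A' + x) \<partial>Lap b1))"
    by (rule mult_left_mono) (auto intro: nn_integral_Lap_shift_le[OF b1])
  also have "\<dots> = ennreal (exp (\<bar>A - A'\<bar> / b1 + \<bar>E - E'\<bar> / b2)) * (\<integral>\<^sup>+x. K (A' + x) \<partial>Lap b1)"
    by (simp add: exp_add ennreal_mult mult_ac)
  finally show ?thesis unfolding iterated K_def .
qed

lemma measure_distr_Lap_pair_shift_le:
  assumes b1: "b1 > 0" and b2: "b2 > 0"
    and g[measurable]: "g \<in> (borel \<Otimes>\<^sub>M borel) \<rightarrow>\<^sub>M R" and S[measurable]: "S \<in> sets R"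
    and shift: "\<bar>A - A'\<bar> / b1 + \<bar>E - E'\<bar> / b2 \<le> \<epsilon>"
  shows "measure (distr (Lap b1 \<Otimes>\<^sub>M Lap b2) R (\<lambda>z. g (A + fst z, E + snd z))) S
     \<le> exp \<epsilon> * measure (distr (Lap b1 \<Otimes>\<^sub>M Lap b2) R (\<lambda>z. g (A' + fst z, E' + snd z))) S"
proof -
  interpret P: finite_measure "Lap b1 \<Otimes>\<^sub>M Lap b2"
    by (rule finite_measure_pair_measure[OF finite_measure_Lap[OF b2] finite_measure_Lap[OF b1]])
  have fin: "finite_measure (distr (Lap b1 \<Otimes>\<^sub>M Lap b2) R (\<lambda>z. g (A0 + fst z, E0 + snd z)))" for A0 E0
    by (rule P.finite_measure_distr) measurable
  let ?c = "exp (\<bar>A - A'\<bar> / b1 + \<bar>E - E'\<bar> / b2)"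
  have "measure (distr (Lap b1 \<Otimes>\<^sub>M Lap b2) R (\<lambda>z. g (A + fst z, E + snd z))) S
     \<le> ?c * measure (distr (Lap b1 \<Otimes>\<^sub>M Lap b2) R (\<lambda>z. g (A' + fst z, E' + snd z))) S"
    using emeasure_distr_Lap_pair_shift_le[OF b1 b2 g S, of A E A' E']
    by (simp add: finite_measure.emeasure_eq_measure[OF fin] ennreal_mult[symmetric])
  also have "\<dots> \<le> exp \<epsilon> * measure (distr (Lap b1 \<Otimes>\<^sub>M Lap b2) R (\<lambda>z. g (A' + fst z, E' + snd z))) S"
    using shift by (intro mult_right_mono) auto
  finally show ?thesis .
qed

definition resp_moment :: "nat set \<Rightarrow> (nat \<times> real \<Rightarrow> bool) \<Rightarrow> database \<Rightarrow> nat \<Rightarrow> real" where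
  "resp_moment I P D m = (\<Sum>t\<in>I. if P (D!t) then snd (D!t) ^ m else 0)"

definition sum_sq_dev :: "nat set \<Rightarrow> (nat \<times> real \<Rightarrow> bool) \<Rightarrow> database \<Rightarrow> real" where
  "sum_sq_dev I P D = resp_moment I P D 2 - (resp_moment I P D 1)\<^sup>2 / resp_moment I P D 0"

lemma resp_moment_0: "resp_moment I P D 0 = (\<Sum>t\<in>I. if P (D!t) then 1 else 0)"
  and resp_moment_1: "resp_moment I P D 1 = (\<Sum>t\<in>I. if P (D!t) then snd (D!t) else 0)"
  unfolding resp_moment_def by (auto intro: sum.cong)

lemma resp_moment_insert:
  "finite I \<Longrightarrow> j \<notin> I \<Longrightarrow>
    resp_moment (insert j I) P D m = resp_moment I P D m + (if P (D!j) then snd (D!j) ^ m else 0)"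
  by (simp add: resp_moment_def)

lemma resp_moment_cong:
  "(\<And>t. t \<in> I \<Longrightarrow> D!t = D'!t) \<Longrightarrow> resp_moment I P D m = resp_moment I P D' m"
  unfolding resp_moment_def by (rule sum.cong) auto

lemma sum_sq_dev_cong:
  "(\<And>t. t \<in> I \<Longrightarrow> D!t = D'!t) \<Longrightarrow> sum_sq_dev I P D = sum_sq_dev I P D'"
  unfolding sum_sq_dev_def using resp_moment_cong by metis

lemma resp_moment_eq_0:
  assumes "finite I" and "resp_moment I P D 0 = 0"
  shows "resp_moment I P D m = 0"
proof -
  have "\<forall>t\<in>I. (if P (D!t) then 1 else 0 :: real) = 0"
  proof (subst sum_nonneg_eq_0_iff[symmetric])
    show "(\<Sum>t\<in>I. if P (D!t) then 1 else 0 :: real) = 0" using assms(2) by (simp add: resp_moment_0)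
  qed (use assms(1) in auto)
  then have "\<forall>t\<in>I. \<not> P (D!t)"
    by (metis one_neq_zero)
  then show ?thesis by (simp add: resp_moment_def)
qed

lemma resp_moment_1_bounds:
  assumes "\<forall>t\<in>I. snd (D!t) \<in> {0..1}"
  shows "0 \<le> resp_moment I P D 1" and "resp_moment I P D 1 \<le> resp_moment I P D 0"
  using assms unfolding resp_moment_def by (auto intro!: sum_nonneg sum_mono)

lemma sum_sq_about_eq_moments:
  "(\<Sum>t\<in>I. if P (D!t) then (snd (D!t) - c)\<^sup>2 else 0)
     = resp_moment I P D 2 - 2 * c * resp_moment I P D 1 + c\<^sup>2 * resp_moment I P D 0"
  unfolding resp_moment_def sum_distrib_left sum_subtractf[symmetric] sum.distrib[symmetric]
  by (rule sum.cong) (auto simp: power2_eq_square algebra_simps)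

lemma sum_sq_dev_eq_sum_sq_about_mean:
  assumes "finite I"
  shows "sum_sq_dev I P D
    = (\<Sum>t\<in>I. if P (D!t) then (snd (D!t) - resp_moment I P D 1 / resp_moment I P D 0)\<^sup>2 else 0)"
  using resp_moment_eq_0[OF assms, of P D]
  by (cases "resp_moment I P D 0 = 0")
     (simp_all add: sum_sq_about_eq_moments sum_sq_dev_def power2_eq_square field_simps)

lemma sum_group_resp_moment:
  assumes "\<forall>t\<in>I. fst (D!t) \<in> {1..k}"
  shows "(\<Sum>i=1..k. resp_moment I (\<lambda>r. fst r = i) D m) = resp_moment I (\<lambda>_. True) D m"
  unfolding resp_moment_def using assms by (subst sum.swap) (simp add: if_distrib)

lemma sq_dev_increment_bounds:
  fixes u c y :: real
  assumes "0 \<le> u" "u \<le> c" "0 \<le> y" "y \<le> 1"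
  shows "0 \<le> y\<^sup>2 - (u + y)\<^sup>2 / (c + 1) + u\<^sup>2 / c"
    and "y\<^sup>2 - (u + y)\<^sup>2 / (c + 1) + u\<^sup>2 / c \<le> 1"
proof -
  consider "c = 0" | "c > 0" using assms by linarith
  then have "0 \<le> y\<^sup>2 - (u + y)\<^sup>2 / (c + 1) + u\<^sup>2 / c
      \<and> y\<^sup>2 - (u + y)\<^sup>2 / (c + 1) + u\<^sup>2 / c \<le> 1"
  proof cases
    case 1
    then show ?thesis using assms by (simp add: power_le_one)
  next
    case 2
    have eq: "y\<^sup>2 - (u + y)\<^sup>2 / (c + 1) + u\<^sup>2 / c = (c * y - u)\<^sup>2 / (c * (c + 1))"
      using 2 by (simp add: field_simps power2_eq_square)
    have "\<bar>c * y - u\<bar> \<le> c"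
    proof -
      have "0 \<le> c * y" "c * y \<le> c" using assms 2 by (simp_all add: mult_left_le)
      then show ?thesis using assms unfolding abs_le_iff by linarith
    qed
    then have "(c * y - u)\<^sup>2 \<le> c * (c + 1)"
      using 2 power_mono[of "\<bar>c * y - u\<bar>" c 2] by (simp add: power2_eq_square distrib_left)
    then show ?thesis unfolding eq using 2 by simp
  qed
  then show "0 \<le> y\<^sup>2 - (u + y)\<^sup>2 / (c + 1) + u\<^sup>2 / c"
    and "y\<^sup>2 - (u + y)\<^sup>2 / (c + 1) + u\<^sup>2 / c \<le> 1" by auto
qed

lemma sum_sq_dev_insert:
  assumes "finite I" "j \<notin> I" and resp: "\<forall>t\<in>insert j I. snd (D!t) \<in> {0..1}"
  shows "sum_sq_dev I P D \<le> sum_sq_dev (insert j I) P D"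
    and "sum_sq_dev (insert j I) P D \<le> sum_sq_dev I P D + 1"
    and "\<not> P (D!j) \<Longrightarrow> sum_sq_dev (insert j I) P D = sum_sq_dev I P D"
proof -
  have u: "0 \<le> resp_moment I P D 1" "resp_moment I P D 1 \<le> resp_moment I P D 0"
    using resp_moment_1_bounds[of I D P] resp by auto
  have y: "0 \<le> snd (D!j)" "snd (D!j) \<le> 1" using resp by auto
  note incr = sq_dev_increment_bounds[OF u y]
  show "sum_sq_dev I P D \<le> sum_sq_dev (insert j I) P D"
    and "sum_sq_dev (insert j I) P D \<le> sum_sq_dev I P D + 1"
    using incr assms(1,2) by (auto simp: sum_sq_dev_def resp_moment_insert add.commute)
  show "\<not> P (D!j) \<Longrightarrow> sum_sq_dev (insert j I) P D = sum_sq_dev I P D"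
    using assms(1,2) by (simp add: sum_sq_dev_def resp_moment_insert)
qed

lemma sum_sq_dev_change_one_row:
  assumes len: "length D' = length D" and j: "j < length D"
    and same: "\<And>t. t < length D \<Longrightarrow> t \<noteq> j \<Longrightarrow> D!t = D'!t"
    and resp: "\<forall>r\<in>set D. snd r \<in> {0..1}" and resp': "\<forall>r\<in>set D'. snd r \<in> {0..1}"
  shows "\<bar>sum_sq_dev {..<length D} P D - sum_sq_dev {..<length D} P D'\<bar> \<le> 1"
    and "\<not> P (D!j) \<Longrightarrow> \<not> P (D'!j) \<Longrightarrow>
           sum_sq_dev {..<length D} P D = sum_sq_dev {..<length D} P D'"
proof -
  define J where "J = {..<length D} - {j}"
  have I: "{..<length D} = insert j J" and J: "finite J" "j \<notin> J"
    using j by (auto simp: J_def)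
  have "\<forall>t\<in>insert j J. snd (D!t) \<in> {0..1}" "\<forall>t\<in>insert j J. snd (D'!t) \<in> {0..1}"
    using resp resp' len unfolding I[symmetric] by (auto dest: nth_mem)
  note ins = sum_sq_dev_insert[OF J this(1), of P] sum_sq_dev_insert[OF J this(2), of P]
  have "sum_sq_dev J P D = sum_sq_dev J P D'"
    by (rule sum_sq_dev_cong) (auto simp: J_def same)
  with ins show "\<bar>sum_sq_dev {..<length D} P D - sum_sq_dev {..<length D} P D'\<bar> \<le> 1"
    and "\<not> P (D!j) \<Longrightarrow> \<not> P (D'!j) \<Longrightarrow>
           sum_sq_dev {..<length D} P D = sum_sq_dev {..<length D} P D'"
    unfolding I by (auto simp: abs_le_iff)
qed

lemma sum_list_map_filter_eq_sum_nth:
  "sum_list (map f (filter P xs)) = (\<Sum>t<length xs. if P (xs!t) then f (xs!t) else (0::'a::comm_monoid_add))"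
proof -
  have "sum_list (map f (filter P xs)) = sum_list (map (\<lambda>x. if P x then f x else 0) xs)"
    by (rule sum_list_map_filter')
  then show ?thesis by (simp add: sum_list_sum_nth atLeast0LessThan)
qed

lemma group_count_eq_resp_moment:
  "real (group_count D i) = resp_moment {..<length D} (\<lambda>r. fst r = i) D 0"
proof -
  have "real (group_count D i) = sum_list (map (\<lambda>_. 1) (filter (\<lambda>r. fst r = i) D))"
    by (simp add: group_count_def sum_list_triv)
  then show ?thesis by (simp add: sum_list_map_filter_eq_sum_nth resp_moment_0)
qed

lemma group_mean_eq_resp_moment:
  "group_mean D i = resp_moment {..<length D} (\<lambda>r. fst r = i) D 1
                    / resp_moment {..<length D} (\<lambda>r. fst r = i) D 0"
  unfolding group_mean_def group_count_eq_resp_moment sum_list_map_filter_eq_sum_nth resp_moment_1 ..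

lemma SSE_eq_sum_sum_sq_dev:
  "SSE k D = (\<Sum>i=1..k. sum_sq_dev {..<length D} (\<lambda>r. fst r = i) D)"
  unfolding SSE_def sum_list_map_filter_eq_sum_nth group_mean_eq_resp_moment
  by (simp only: sum_sq_dev_eq_sum_sq_about_mean finite_lessThan)

lemma SSA_add_SSE:
  assumes labels: "\<forall>r\<in>set D. fst r \<in> {1..k}" and "D \<noteq> []"
  shows "SSA k D + SSE k D = sum_sq_dev {..<length D} (\<lambda>_. True) D"
proof -
  define M where "M = grand_mean D"
  let ?m = "\<lambda>P j. resp_moment {..<length D} P D j"
  have group: "real (group_count D i) * (group_mean D i - M)\<^sup>2 + sum_sq_dev {..<length D} (\<lambda>r. fst r = i) D
        = ?m (\<lambda>r. fst r = i) 2 - 2 * M * ?m (\<lambda>r. fst r = i) 1 + M\<^sup>2 * ?m (\<lambda>r. fst r = i) 0" for i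
    using resp_moment_eq_0[of "{..<length D}" "\<lambda>r. fst r = i" D]
    by (cases "?m (\<lambda>r. fst r = i) 0 = 0")
       (simp_all add: group_count_eq_resp_moment group_mean_eq_resp_moment sum_sq_dev_def
         power2_eq_square field_simps)
  have "\<forall>t\<in>{..<length D}. fst (D!t) \<in> {1..k}" using labels by auto
  note total = sum_group_resp_moment[OF this]
  have "SSA k D + SSE k D
      = (\<Sum>i=1..k. ?m (\<lambda>r. fst r = i) 2 - 2 * M * ?m (\<lambda>r. fst r = i) 1 + M\<^sup>2 * ?m (\<lambda>r. fst r = i) 0)"
    unfolding SSA_def SSE_eq_sum_sum_sq_dev M_def[symmetric] sum.distrib[symmetric] group ..
  also have "\<dots> = ?m (\<lambda>_. True) 2 - 2 * M * ?m (\<lambda>_. True) 1 + M\<^sup>2 * ?m (\<lambda>_. True) 0"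
    by (simp only: sum.distrib sum_subtractf sum_distrib_left[symmetric] total)
  also have "?m (\<lambda>_. True) 0 = real (length D)"
    by (simp add: resp_moment_0)
  also have "M = ?m (\<lambda>_. True) 1 / real (length D)"
    unfolding M_def grand_mean_def resp_moment_1 by (simp add: sum_list_sum_nth atLeast0LessThan)
  finally show ?thesis
    using \<open>D \<noteq> []\<close> by (simp add: sum_sq_dev_def resp_moment_0 power2_eq_square field_simps)
qed

lemma neighboringE:
  assumes "neighboring D D'"
  obtains j where "j < length D" "\<And>t. t < length D \<Longrightarrow> t \<noteq> j \<Longrightarrow> D!t = D'!t"
proof -
  obtain j where "{t. t < length D \<and> D!t \<noteq> D'!t} = {j}"
    using assms card_1_singletonE unfolding neighboring_def by blast
  then show thesis using that by blast
qed

lemma SSE_neighboring_le: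
  assumes v: "valid_db k n D" and v': "valid_db k n D'" and "neighboring D D'"
  shows "\<bar>SSE k D - SSE k D'\<bar> \<le> 2"
proof -
  obtain j where j: "j < length D" and same: "\<And>t. t < length D \<Longrightarrow> t \<noteq> j \<Longrightarrow> D!t = D'!t"
    using neighboringE[OF \<open>neighboring D D'\<close>] by blast
  have len: "length D' = length D" using v v' by (simp add: valid_db_def)
  note change = sum_sq_dev_change_one_row[OF len j same, of "\<lambda>r. fst r = i" for i]
  define G where "G = {fst (D!j), fst (D'!j)}"
  have group: "\<bar>sum_sq_dev {..<length D} (\<lambda>r. fst r = i) D - sum_sq_dev {..<length D} (\<lambda>r. fst r = i) D'\<bar>
      \<le> (if i \<in> G then 1 else 0)" for i
    using change v v' by (auto simp: G_def valid_db_def)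
  have "\<bar>SSE k D - SSE k D'\<bar>
      \<le> (\<Sum>i=1..k. \<bar>sum_sq_dev {..<length D} (\<lambda>r. fst r = i) D - sum_sq_dev {..<length D} (\<lambda>r. fst r = i) D'\<bar>)"
    unfolding SSE_eq_sum_sum_sq_dev len sum_subtractf[symmetric] by (rule sum_abs)
  also have "\<dots> \<le> (\<Sum>i=1..k. if i \<in> G then 1 else 0)"
    by (rule sum_mono) (rule group)
  also have "\<dots> = real (card ({1..k} \<inter> G))"
    by (simp add: sum.inter_restrict[symmetric])
  also have "\<dots> \<le> real (card G)"
    by (simp add: card_mono G_def)
  also have "\<dots> \<le> 2"
    by (simp add: G_def card_insert_if)
  finally show ?thesis .
qed

lemma SSA_neighboring_le:
  assumes v: "valid_db k n D" and v': "valid_db k n D'" and "neighboring D D'"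
  shows "\<bar>SSA k D - SSA k D'\<bar> \<le> 3"
proof -
  obtain j where j: "j < length D" and same: "\<And>t. t < length D \<Longrightarrow> t \<noteq> j \<Longrightarrow> D!t = D'!t"
    using neighboringE[OF \<open>neighboring D D'\<close>] by blast
  have len: "length D' = length D" using v v' by (simp add: valid_db_def)
  have "D \<noteq> []" "D' \<noteq> []" using j len by auto
  then have "SSA k D = sum_sq_dev {..<length D} (\<lambda>_. True) D - SSE k D"
    and "SSA k D' = sum_sq_dev {..<length D} (\<lambda>_. True) D' - SSE k D'"
    using SSA_add_SSE[of D k] SSA_add_SSE[of D' k] v v' len by (auto simp: valid_db_def)
  moreover have "\<bar>sum_sq_dev {..<length D} (\<lambda>_. True) D - sum_sq_dev {..<length D} (\<lambda>_. True) D'\<bar> \<le> 1"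
    using sum_sq_dev_change_one_row(1)[OF len j same] v v' by (simp add: valid_db_def)
  ultimately show ?thesis
    using SSE_neighboring_le[OF assms] by (simp add: abs_le_iff)
qed

lemma divide_by_scale_le:
  fixes x B c :: real
  assumes "x \<le> B" "B > 0" "c > 0"
  shows "x / (B / c) \<le> c"
  using assms mult_right_mono[of x B c] by (simp add: field_simps)

theorem mainTheorem3:
  fixes \<epsilon> :: real and k n :: nat
  assumes "\<epsilon> > 0" and "k \<ge> 2" and "n > k"
  shows "differentially_private \<epsilon> (valid_db k n) (anova_mech \<epsilon> k n)
           (borel \<Otimes>\<^sub>M borel \<Otimes>\<^sub>M borel)"
proof -
  define b1 where "b1 = (9 + 5 / real n) / (\<epsilon> / 2)"
  define b2 where "b2 = 7 / (\<epsilon> / 2)"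
  have b1: "b1 > 0" and b2: "b2 > 0"
    using assms by (simp_all add: b1_def b2_def add_pos_nonneg)
  define F :: "real \<times> real \<Rightarrow> real \<times> real \<times> real" where
    "F = (\<lambda>(a, e). ((a / (real k - 1)) / (e / (real n - real k)), a, e))"
  have F: "F \<in> (borel \<Otimes>\<^sub>M borel) \<rightarrow>\<^sub>M (borel \<Otimes>\<^sub>M borel \<Otimes>\<^sub>M borel)"
    unfolding F_def by measurable
  have mech: "anova_mech \<epsilon> k n D = distr (Lap b1 \<Otimes>\<^sub>M Lap b2) (borel \<Otimes>\<^sub>M borel \<Otimes>\<^sub>M borel)
      (\<lambda>z. F (SSA k D + fst z, SSE k D + snd z))" for D
    unfolding anova_mech_def b1_def b2_def F_def
    by (rule arg_cong[where f="distr _ _"]) (auto simp: fun_eq_iff Let_def)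
  show ?thesis unfolding differentially_private_def
  proof (intro allI impI ballI)
    fix D D' and S :: "(real \<times> real \<times> real) set"
    assume v: "valid_db k n D" and v': "valid_db k n D'" and nb: "neighboring D D'"
      and S: "S \<in> sets (borel \<Otimes>\<^sub>M borel \<Otimes>\<^sub>M borel)"
    \<comment> \<open>The noise is calibrated to the paper's sensitivity bounds \<open>9 + 5/n\<close> and \<open>7\<close>; 3 and 2 are sharper.\<close>
    have "\<bar>SSA k D - SSA k D'\<bar> \<le> 9 + 5 / real n"
      using SSA_neighboring_le[OF v v' nb] by (smt (verit) divide_nonneg_nonneg of_nat_0_le_iff)
    then have "\<bar>SSA k D - SSA k D'\<bar> / b1 \<le> \<epsilon> / 2"
      unfolding b1_def using assms by (intro divide_by_scale_le) (simp_all add: add_pos_nonneg)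
    moreover have "\<bar>SSE k D - SSE k D'\<bar> / b2 \<le> \<epsilon> / 2"
      unfolding b2_def using SSE_neighboring_le[OF v v' nb] assms by (intro divide_by_scale_le) simp_all
    ultimately show "measure (anova_mech \<epsilon> k n D) S \<le> exp \<epsilon> * measure (anova_mech \<epsilon> k n D') S"
      unfolding mech by (intro measure_distr_Lap_pair_shift_le[OF b1 b2 F S]) linarith
  qed
qed

end
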